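(* Let $n$ be a non-negative integer. Then \[ \sum_{k=0}^{\lfloor n/2\rfloor}\binom{n}{2k}2^{n-2k}\binom{2k}{k}H_{2k}^{(2)}=\binom{2n}{n}H_n^{(2)}-\sum_{k=0}^{n-1}\binom{2k}{k}2^{n-k}\frac{H_n-H_k}{n-k}, \] \[ \sum_{k=0}^{n}(-1)^k\binom{n}{k}2^{-k}\binom{2k}{k}H_k^{(2)}=-\sum_{k=0}^{\lfloor n/2\rfloor-1}\binom{2k}{k}2^{-2k}\frac{H_n-H_{2k}}{n-2k}+\begin{cases}2^{-n}\binom{n}{n/2}H_n^{(2)},&n\text{ even},\\[2pt]-2^{-n+1}\binom{n-1}{(n-1)/2}\dfrac1n,&n\text{ odd},\end{cases} \] and, more generally, for every real number $v$, \[ \sum_{k=0}^{\lfloor n/2\rfloor}\binom{n}{2k}2^{n-2k}\binom{2k}{k}\binom{(2k+v)/2}{v/2}^{-1}H_{2k}^{(2)}=\binom{2n+v}{(2n+v)/2}\binom{n+v}{v/2}^{-1}H_n^{(2)}-\sum_{k=0}^{n-1}\binom{2k+v}{(2k+v)/2}2^{n-k}\binom{k+v}{v/2}^{-1}\frac{H_n-H_k}{n-k}, \] \[ \begin{aligned} \sum_{k=0}^{n}(-1)^k\binom{n}{k}2^{-k}\binom{2k+v}{(2k+v)/2}\binom{k+v}{v/2}^{-1}H_k^{(2)} &=-\sum_{k=0}^{\lfloor n/2\rfloor-1}\binom{2k}{k}2^{-2k}\binom{(2k+v)/2}{v/2}^{-1}\frac{H_n-H_{2k}}{n-2k}\\ &\quad+\begin{cases}\binom{n}{n/2}2^{-n}\binom{(n+v)/2}{v/2}^{-1}H_n^{(2)},&n\text{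 even},\\[2pt]-\binom{n-1}{(n-1)/2}2^{-n+1}\binom{(n-1+v)/2}{v/2}^{-1}\dfrac1n,&n\text{ odd}.\end{cases} \end{aligned} \]
   Context: For integers $m\ge0$, $H_m=\sum_{j=1}^m 1/j$ and $H_m^{(2)}=\sum_{j=1}^m 1/j^2$. Binomial coefficients with real or complex entries: $\binom{x}{y}=\frac{\Gamma(x+1)}{\Gamma(y+1)\Gamma(x-y+1)}$. Empty sums are zero. *)

theory Defs
  imports "HOL-Analysis.Analysis"
begin

definition H :: "nat \<Rightarrow> real" where
  "H m = (\<Sum>j=1..m. 1 / real j)"

definition H2 :: "nat \<Rightarrow> real" where
  "H2 m = (\<Sum>j=1..m. 1 / (real j)^2)"

definition gbinom :: "real \<Rightarrow> real \<Rightarrow> real" where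
  "gbinom x y = Gamma (x + 1) / (Gamma (y + 1) * Gamma (x - y + 1))"

end

(*
  Write D(n,k) = (H_n - H_k)/(n - k). By induction on n,
  sum_{k<n} C(k,j) D(n,k) = C(n,j) (H2_n - H2_j), and summing this against a sequence a gives:
  if b_k = sum_m C(k,m) a_m, then sum_m C(n,m) a_m H2_m = b_n H2_n - sum_{k<n} b_k D(n,k).

  Put w_k = C(2k,k) 4^-k / binom(k+v/2, v/2) and c_k = binom(2k+v, k+v/2) / binom(k+v, v/2).
  The sequence w_0, 0, w_1, 0, ... has binomial transform c_k / 2^k, i.e.
  sum_j C(n,2j) w_j = c_n / 2^n, a hypergeometric identity proved in Pochhammer form by a
  telescoping (Zeilberger) certificate. Feeding this pair into the transformation gives the
  first and third identities; by binomial inversion w_0, 0, w_1, 0, ... is in turn the transform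
  of (-1)^k c_k / 2^k, which gives the second and fourth. The first two are the case v = 0.
*)

theory Submission
  imports Defs
begin

section \<open>Divided differences of harmonic numbers\<close>

lemma H_Suc: "H (Suc m) = H m + 1 / real (Suc m)"
  by (simp add: H_def)

lemma H2_Suc: "H2 (Suc m) = H2 m + 1 / (real (Suc m))^2"
  by (simp add: H2_def)

lemma H_eq_sum_lessThan: "H n = (\<Sum>k<n. 1 / real (Suc k))"
  unfolding H_def by (induction n) auto

definition H_diff_quot :: "nat \<Rightarrow> nat \<Rightarrow> real" where
  "H_diff_quot n k = (H n - H k) / (real n - real k)"

lemma H_diff_quot_Suc_Suc:
  assumes "k < n"
  shows "H_diff_quot (Suc n) (Suc k) = H_diff_quot n k - 1 / (real (Suc n) * real (Suc k))"
proof -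
  have "real n - real k \<noteq> 0" using assms by simp
  then show ?thesis
    by (simp add: H_diff_quot_def H_Suc divide_simps) (simp add: algebra_simps)
qed

lemma H_diff_quot_pred:
  assumes "n > 0"
  shows "H_diff_quot n (n - 1) = 1 / real n"
  using assms by (cases n) (simp_all add: H_diff_quot_def H_Suc)

lemma sum_H_diff_quot: "(\<Sum>k<n. H_diff_quot n k) = H2 n"
proof (induction n)
  case 0
  show ?case by (simp add: H2_def)
next
  case (Suc n)
  have "(\<Sum>k<Suc n. H_diff_quot (Suc n) k)
      = H_diff_quot (Suc n) 0 + (\<Sum>k<n. H_diff_quot (Suc n) (Suc k))"
    by (rule sum.lessThan_Suc_shift)
  also have "(\<Sum>k<n. H_diff_quot (Suc n) (Suc k))
      = (\<Sum>k<n. H_diff_quot n k - 1 / (real (Suc n) * real (Suc k)))"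
    by (rule sum.cong) (simp_all add: H_diff_quot_Suc_Suc)
  also have "H_diff_quot (Suc n) 0 = H (Suc n) / real (Suc n)"
    by (simp add: H_diff_quot_def H_def)
  also have "(\<Sum>k<n. H_diff_quot n k - 1 / (real (Suc n) * real (Suc k)))
      = H2 n - H n / real (Suc n)"
    by (simp add: Suc.IH sum_subtractf H_eq_sum_lessThan sum_divide_distrib mult.commute)
  also have "H (Suc n) / real (Suc n) + (H2 n - H n / real (Suc n)) = H2 (Suc n)"
    by (simp add: H_Suc H2_Suc add_divide_distrib power2_eq_square)
  finally show ?case .
qed

lemma real_Suc_times_choose_Suc:
  "real (Suc k) * real (n choose Suc k) = (real n - real k) * real (n choose k)"
proof (cases "k \<le> n")
  case True
  have "Suc k * (n choose Suc k) = (n - k) * (n choose k)"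
    by (simp only: binomial_absorption binomial_absorb_comp)
  then show ?thesis
    using True by (metis of_nat_diff of_nat_mult)
qed (auto simp: binomial_eq_0)

lemma real_diff_times_choose_Suc:
  "(real n + 1 - real k) * real (Suc n choose k) = real (Suc n) * real (n choose k)"
proof (cases "k \<le> Suc n")
  case True
  have "(Suc n - k) * (Suc n choose k) = Suc n * (n choose k)"
    using binomial_absorb_comp[of "Suc n" k] by simp
  then show ?thesis
    using True by (metis of_nat_diff of_nat_mult add.commute of_nat_Suc)
qed (auto simp: binomial_eq_0)

lemma sum_lessThan_choose: "(\<Sum>k<n. real (k choose i)) = real (n choose Suc i)"
  by (induction n) auto

lemma sum_lessThan_choose_Suc_divide:
  "(\<Sum>k<n. real (Suc k choose Suc i) / real (Suc k)) = real (n choose Suc i) / real (Suc i)"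
proof -
  have "real (Suc k choose Suc i) / real (Suc k) = real (k choose i) / real (Suc i)" for k
    using Suc_times_binomial[of i k]
    by (simp add: field_simps flip: of_nat_mult del: of_nat_Suc binomial_Suc_Suc)
  then show ?thesis
    by (simp add: sum_lessThan_choose flip: sum_divide_distrib)
qed

lemma choose_H2_Suc:
  "real (n choose i) * (H2 n - H2 i) + real (n choose Suc i) * (H2 n - H2 (Suc i))
     - real (n choose Suc i) / real (Suc i) / real (Suc n)
   = real (Suc n choose Suc i) * (H2 (Suc n) - H2 (Suc i))"
proof -
  define a b where "a = real (Suc i)" and "b = real (Suc n)"
  have "a \<noteq> 0" "b \<noteq> 0"
    by (simp_all add: a_def b_def)
  have Y: "real (n choose Suc i) = (b - a) * real (n choose i) / a"
    using real_Suc_times_choose_Suc[of i n] \<open>a \<noteq> 0\<close>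
    by (simp add: a_def b_def field_simps)
  show ?thesis
    unfolding binomial_Suc_Suc of_nat_add Y H2_Suc a_def[symmetric] b_def[symmetric]
    using \<open>a \<noteq> 0\<close> \<open>b \<noteq> 0\<close>
    by (simp add: field_simps power2_eq_square)
qed

lemma sum_choose_H_diff_quot:
  "(\<Sum>k<n. real (k choose j) * H_diff_quot n k) = real (n choose j) * (H2 n - H2 j)"
proof (induction n arbitrary: j)
  case 0
  show ?case
    by (cases j) (simp_all add: H2_def)
next
  case (Suc n)
  show ?case
  proof (cases j)
    case 0
    then show ?thesis
      using sum_H_diff_quot[of "Suc n"] by (simp add: H2_def)
  next
    case (Suc i)
    have "(\<Sum>k<Suc n. real (k choose j) * H_diff_quot (Suc n) k)
        = (\<Sum>k<n. (real (k choose i) + real (k choose Suc i))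
                     * (H_diff_quot n k - 1 / (real (Suc n) * real (Suc k))))"
      by (subst sum.lessThan_Suc_shift) (auto simp: Suc H_diff_quot_Suc_Suc intro!: sum.cong)
    also have "\<dots> = (\<Sum>k<n. real (k choose i) * H_diff_quot n k)
                    + (\<Sum>k<n. real (k choose Suc i) * H_diff_quot n k)
                    - (\<Sum>k<n. real (Suc k choose Suc i) / real (Suc k)) / real (Suc n)"
      by (simp add: algebra_simps sum.distrib sum_subtractf sum_divide_distrib)
    also have "\<dots> = real (n choose i) * (H2 n - H2 i) + real (n choose Suc i) * (H2 n - H2 (Suc i))
                    - real (n choose Suc i) / real (Suc i) / real (Suc n)"
      by (simp only: Suc.IH sum_lessThan_choose_Suc_divide)
    also have "\<dots> = real (Suc n choose j) * (H2 (Suc n) - H2 j)"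
      unfolding Suc by (rule choose_H2_Suc)
    finally show ?thesis .
  qed
qed

section \<open>Binomial transforms\<close>

lemma sum_atMost_choose_extend:
  fixes f :: "nat \<Rightarrow> 'a::semiring_1"
  assumes "k \<le> n"
  shows "(\<Sum>m\<le>k. of_nat (k choose m) * f m) = (\<Sum>m\<le>n. of_nat (k choose m) * f m)"
  by (rule sum.mono_neutral_left) (use assms in \<open>auto simp: binomial_eq_0\<close>)

lemma H2_binomial_transform:
  assumes b: "\<And>k. b k = (\<Sum>m\<le>k. real (k choose m) * a m)"
  shows "(\<Sum>m\<le>n. real (n choose m) * a m * H2 m)
       = b n * H2 n - (\<Sum>k<n. b k * H_diff_quot n k)"
proof -
  have "(\<Sum>k<n. b k * H_diff_quot n k)
      = (\<Sum>k<n. \<Sum>m\<le>n. real (k choose m) * a m * H_diff_quot n k)"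
    by (rule sum.cong) (simp_all add: b sum_atMost_choose_extend[of _ n] sum_distrib_right)
  also have "\<dots> = (\<Sum>m\<le>n. a m * (\<Sum>k<n. real (k choose m) * H_diff_quot n k))"
    by (subst sum.swap) (simp add: sum_distrib_left algebra_simps)
  also have "\<dots> = (\<Sum>m\<le>n. real (n choose m) * a m * (H2 n - H2 m))"
    by (simp only: sum_choose_H_diff_quot) (simp add: algebra_simps)
  finally show ?thesis
    by (simp add: b sum_distrib_right right_diff_distrib sum_subtractf)
qed

lemma sum_alternating_choose_choose:
  assumes "m \<le> n"
  shows "(\<Sum>k\<le>n. (-1)^k * of_nat (n choose k) * of_nat (k choose m))
       = (if m = n then (-1)^n else (0::'a::comm_ring_1))"
proof -
  have "(\<Sum>k\<le>n. (-1)^k * of_nat (n choose k) * of_nat (k choose m))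
      = (\<Sum>k\<in>{m..n}. (-1)^k * of_nat (n choose m) * of_nat ((n - m) choose (k - m)) :: 'a)"
  proof (rule sum.mono_neutral_cong_right)
    show "(-1)^k * of_nat (n choose k) * of_nat (k choose m)
        = ((-1)^k * of_nat (n choose m) * of_nat ((n - m) choose (k - m)) :: 'a)"
      if "k \<in> {m..n}" for k
      using choose_mult[of m k n] that by (simp add: mult.assoc flip: of_nat_mult)
  qed (auto simp: binomial_eq_0)
  also have "\<dots>
      = (\<Sum>i\<le>n - m. (-1)^(i + m) * of_nat (n choose m) * of_nat ((n - m) choose i))"
    using assms by (simp add: sum.atLeastAtMost_shift_0 atLeast0AtMost add.commute)
  also have "\<dots>
      = (-1)^m * of_nat (n choose m) * (\<Sum>i\<le>n - m. (-1)^i * of_nat ((n - m) choose i))"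
    by (simp add: sum_distrib_left power_add algebra_simps)
  also have "\<dots> = (if m = n then (-1)^n else 0)"
    using assms choose_alternating_sum[of "n - m", where 'a='a] by auto
  finally show ?thesis .
qed

lemma binomial_inversion:
  fixes a b :: "nat \<Rightarrow> 'a::comm_ring_1"
  assumes b: "\<And>k. b k = (\<Sum>m\<le>k. of_nat (k choose m) * a m)"
  shows "(\<Sum>k\<le>n. (-1)^k * of_nat (n choose k) * b k) = (-1)^n * a n"
proof -
  have "(\<Sum>k\<le>n. (-1)^k * of_nat (n choose k) * b k)
      = (\<Sum>k\<le>n. \<Sum>m\<le>n. (-1)^k * of_nat (n choose k) * (of_nat (k choose m) * a m))"
    by (rule sum.cong) (simp_all add: b sum_atMost_choose_extend[of _ n] sum_distrib_left)
  also have "\<dots>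
      = (\<Sum>m\<le>n. a m * (\<Sum>k\<le>n. (-1)^k * of_nat (n choose k) * of_nat (k choose m)))"
    by (subst sum.swap) (simp add: sum_distrib_left algebra_simps)
  also have "\<dots> = (\<Sum>m\<le>n. if m = n then (-1)^n * a n else 0)"
    by (rule sum.cong) (simp_all add: sum_alternating_choose_choose)
  finally show ?thesis
    by simp
qed

section \<open>The even-index transform in Pochhammer form\<close>

lemma half_plus_one_notin_nonpos_Ints:
  fixes v :: real
  assumes "v + 1 \<notin> \<int>\<^sub>\<le>\<^sub>0"
  shows "v / 2 + 1 \<notin> \<int>\<^sub>\<le>\<^sub>0"
proof
  assume "v / 2 + 1 \<in> \<int>\<^sub>\<le>\<^sub>0"
  then obtain m where "v / 2 + 1 = - real m"
    by (elim nonpos_Ints_cases')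
  then have "v + 1 = - of_nat (2 * m + 1)"
    by simp
  with assms show False
    by (metis minus_of_nat_in_nonpos_Ints)
qed

(* w_k and c_k of the identities, in Pochhammer form (cf. even_weight_gbinom, central_ratio_gbinom) *)
definition even_weight :: "real \<Rightarrow> nat \<Rightarrow> real" where
  "even_weight v k = pochhammer (1/2) k / pochhammer (v/2 + 1) k"

definition central_ratio :: "real \<Rightarrow> nat \<Rightarrow> real" where
  "central_ratio v k = pochhammer (v + 1) (2*k) / (pochhammer (v/2 + 1) k * pochhammer (v + 1) k)"

lemma even_weight_Suc:
  assumes "v + 1 \<notin> \<int>\<^sub>\<le>\<^sub>0"
  shows "even_weight v (Suc k) * (2 * real k + v + 2) = even_weight v k * (2 * real k + 1)"
proof -
  define a where "a = v/2 + 1"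
  have "pochhammer a (Suc k) \<noteq> 0"
    using half_plus_one_notin_nonpos_Ints[OF assms] pochhammer_eq_0_imp_nonpos_Int
    unfolding a_def by blast
  then have "a + real k \<noteq> 0"
    by (simp add: pochhammer_rec')
  have w: "even_weight v (Suc k) = even_weight v k * ((1/2 + real k) / (a + real k))"
    unfolding even_weight_def a_def[symmetric] pochhammer_rec' by (simp add: ac_simps)
  have v: "2 * real k + v + 2 = 2 * (a + real k)"
    by (simp add: a_def)
  show ?thesis
    unfolding w v using \<open>a + real k \<noteq> 0\<close> by (simp add: field_simps)
qed

lemma central_ratio_Suc:
  assumes "v + 1 \<notin> \<int>\<^sub>\<le>\<^sub>0"
  shows "central_ratio v (Suc k) * (real k + v + 1) = 2 * (2 * real k + v + 1) * central_ratio v k"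
proof -
  define a where "a = v/2 + 1"
  have "pochhammer a (Suc k) \<noteq> 0" "pochhammer (v + 1) (Suc k) \<noteq> 0"
    using half_plus_one_notin_nonpos_Ints[OF assms] assms pochhammer_eq_0_imp_nonpos_Int
    unfolding a_def by blast+
  then have "a + real k \<noteq> 0" "v + 1 + real k \<noteq> 0"
    by (simp_all add: pochhammer_rec')
  have P: "pochhammer (v + 1) (2 * Suc k)
      = (2 * (v + 1 + 2 * real k) * (a + real k)) * pochhammer (v + 1) (2 * k)"
    by (simp add: a_def pochhammer_rec' algebra_simps)
  have "central_ratio v (Suc k)
      = central_ratio v k
          * ((2 * (v + 1 + 2 * real k) * (a + real k)) / ((a + real k) * (v + 1 + real k)))"
    unfolding central_ratio_def a_def[symmetric] P pochhammer_rec'[of a] pochhammer_rec'[of "v + 1"]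
    by (simp only: times_divide_times_eq ac_simps)
  also have "\<dots> = central_ratio v k * (2 * (v + 1 + 2 * real k) / (v + 1 + real k))"
    using \<open>a + real k \<noteq> 0\<close> by simp
  finally show ?thesis
    using \<open>v + 1 + real k \<noteq> 0\<close> by (simp add: field_simps)
qed

(* Zeilberger certificate for the recurrence (n + v + 1) S(n + 1) = (2n + v + 1) S(n)
   of S(n) = sum_j C(n,2j) w_j *)
definition even_weight_certificate :: "real \<Rightarrow> nat \<Rightarrow> nat \<Rightarrow> real" where
  "even_weight_certificate v n j
     = - 2 / (real n + 1) * real (Suc n choose (2*j)) * real j * (2 * real j + v) * even_weight v j"

lemma even_weight_certificate_Suc:
  assumes "v + 1 \<notin> \<int>\<^sub>\<le>\<^sub>0"
  shows "even_weight_certificate v n (Suc j)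
       = - (real n - 2 * real j) * real (n choose (2*j)) * even_weight v j"
proof -
  have "real (Suc (Suc (2*j))) * real (Suc n choose Suc (Suc (2*j)))
      = real (Suc n) * real (n choose Suc (2*j))"
    using Suc_times_binomial[of "Suc (2*j)" n] by (metis of_nat_mult)
  then have choose: "(2 * real j + 2) * real (Suc n choose (2 * Suc j))
      = (real n + 1) * real (n choose Suc (2*j))"
    by (simp add: algebra_simps del: binomial_Suc_Suc)
  have "even_weight_certificate v n (Suc j)
      = - ((2 * real j + 2) * real (Suc n choose (2 * Suc j)))
          * (even_weight v (Suc j) * (2 * real j + v + 2)) / (real n + 1)"
    unfolding even_weight_certificate_def by (simp add: field_simps del: binomial_Suc_Suc)
  also have "\<dots> = - (real (Suc (2*j)) * real (n choose Suc (2*j))) * even_weight v j"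
    unfolding choose even_weight_Suc[OF assms] by (simp add: field_simps)
  also have "\<dots> = - (real n - 2 * real j) * real (n choose (2*j)) * even_weight v j"
    by (simp only: real_Suc_times_choose_Suc) (simp add: algebra_simps)
  finally show ?thesis .
qed

lemma even_weight_certificate_diff:
  assumes "v + 1 \<notin> \<int>\<^sub>\<le>\<^sub>0"
  shows "(real n + v + 1) * real (Suc n choose (2*j)) * even_weight v j
           - (2 * real n + v + 1) * real (n choose (2*j)) * even_weight v j
         = even_weight_certificate v n (Suc j) - even_weight_certificate v n j"
proof -
  define A B w where "A = real (Suc n choose (2*j))" and "B = real (n choose (2*j))"
    and "w = even_weight v j"
  have B: "B = (real n + 1 - 2 * real j) * A / (real n + 1)"
    using real_diff_times_choose_Suc[of n "2*j"] by (simp add: A_def B_def field_simps)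
  have "even_weight_certificate v n j = - 2 / (real n + 1) * A * real j * (2 * real j + v) * w"
    by (simp add: even_weight_certificate_def A_def w_def)
  then show ?thesis
    unfolding even_weight_certificate_Suc[OF assms]
      A_def[symmetric] B_def[symmetric] w_def[symmetric] B
    by (simp add: field_simps)
qed

lemma sum_choose_even_weight:
  assumes "v + 1 \<notin> \<int>\<^sub>\<le>\<^sub>0"
  shows "(\<Sum>j\<le>n. real (n choose (2*j)) * even_weight v j) = central_ratio v n / 2^n"
proof (induction n)
  case 0
  show ?case by (simp add: even_weight_def central_ratio_def)
next
  case (Suc n)
  have "(\<Sum>j\<le>Suc n. (real n + v + 1) * real (Suc n choose (2*j)) * even_weight v j
           - (2 * real n + v + 1) * real (n choose (2*j)) * even_weight v j)
      = even_weight_certificate v n (Suc (Suc n)) - even_weight_certificate v n 0"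
    by (simp only: even_weight_certificate_diff[OF assms] sum_lessThan_telescope
        flip: lessThan_Suc_atMost)
  also have "\<dots> = 0"
    by (simp add: even_weight_certificate_def binomial_eq_0 del: binomial_Suc_Suc)
  finally have "(real n + v + 1) * (\<Sum>j\<le>Suc n. real (Suc n choose (2*j)) * even_weight v j)
      = (2 * real n + v + 1) * (\<Sum>j\<le>Suc n. real (n choose (2*j)) * even_weight v j)"
    by (simp only: sum_subtractf mult.assoc flip: sum_distrib_left)
  also have "(\<Sum>j\<le>Suc n. real (n choose (2*j)) * even_weight v j) = central_ratio v n / 2^n"
    by (simp add: Suc.IH binomial_eq_0)
  also have "(2 * real n + v + 1) * \<dots>
      = (real n + v + 1) * (central_ratio v (Suc n) / 2^Suc n)"
    using central_ratio_Suc[OF assms, of n] by (simp add: field_simps)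
  finally have "(real n + v + 1) * (\<Sum>j\<le>Suc n. real (Suc n choose (2*j)) * even_weight v j)
      = (real n + v + 1) * (central_ratio v (Suc n) / 2^Suc n)" .
  moreover have "real n + v + 1 \<noteq> 0"
    using assms plus_of_nat_eq_0_imp[of "v + 1" n] by (auto simp: add_ac)
  ultimately show ?case
    using mult_left_cancel by blast
qed

definition even_spread :: "(nat \<Rightarrow> real) \<Rightarrow> nat \<Rightarrow> real" where
  "even_spread f m = (if even m then f (m div 2) else 0)"

lemma sum_lessThan_even_spread:
  "(\<Sum>k<n. h k * even_spread f k) = (\<Sum>j<(n + 1) div 2. h (2*j) * f j)"
  by (induction n) (auto simp: even_spread_def lessThan_Suc)

lemma sum_atMost_even_spread:
  "(\<Sum>m\<le>n. h m * even_spread f m) = (\<Sum>j\<le>n div 2. h (2*j) * f j)"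
  using sum_lessThan_even_spread[of h f "Suc n"] by (simp add: lessThan_Suc_atMost)

lemma central_ratio_binomial_transform:
  assumes "v + 1 \<notin> \<int>\<^sub>\<le>\<^sub>0"
  shows "central_ratio v k / 2^k = (\<Sum>m\<le>k. real (k choose m) * even_spread (even_weight v) m)"
proof -
  have "(\<Sum>j\<le>k div 2. real (k choose (2*j)) * even_weight v j)
      = (\<Sum>j\<le>k. real (k choose (2*j)) * even_weight v j)"
    by (rule sum.mono_neutral_left) (auto simp: binomial_eq_0)
  then show ?thesis
    by (simp add: sum_atMost_even_spread sum_choose_even_weight[OF assms])
qed

lemma even_spread_binomial_transform:
  assumes "v + 1 \<notin> \<int>\<^sub>\<le>\<^sub>0"
  shows "even_spread (even_weight v) k
       = (\<Sum>m\<le>k. real (k choose m) * ((-1)^m * (central_ratio v m / 2^m)))"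
proof -
  have "(\<Sum>m\<le>k. (-1)^m * real (k choose m) * (central_ratio v m / 2^m))
      = (-1)^k * even_spread (even_weight v) k"
    by (rule binomial_inversion) (rule central_ratio_binomial_transform[OF assms])
  also have "\<dots> = even_spread (even_weight v) k"
    by (simp add: even_spread_def)
  finally show ?thesis
    by (simp add: ac_simps)
qed

lemma sum_even_choose_H2_pochhammer:
  assumes "v + 1 \<notin> \<int>\<^sub>\<le>\<^sub>0"
  shows "(\<Sum>k\<le>n div 2. real (n choose (2*k)) * 2^(n - 2*k) * (4^k * even_weight v k) * H2 (2*k))
       = central_ratio v n * H2 n - (\<Sum>k<n. central_ratio v k * 2^(n - k) * H_diff_quot n k)"
proof -
  have pow: "(2::real)^(n - 2*k) * 4^k = 2^n" if "k \<le> n div 2" for k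
  proof -
    have "(2::real)^(n - 2*k) * 4^k = 2^(n - 2*k + 2*k)"
      by (simp add: power_add power_mult)
    then show ?thesis
      using that by simp
  qed
  have "(\<Sum>k\<le>n div 2. real (n choose (2*k)) * 2^(n - 2*k) * (4^k * even_weight v k) * H2 (2*k))
      = 2^n * (\<Sum>k\<le>n div 2. real (n choose (2*k)) * H2 (2*k) * even_weight v k)"
    unfolding sum_distrib_left by (rule sum.cong) (simp_all flip: pow add: ac_simps)
  also have "(\<Sum>k\<le>n div 2. real (n choose (2*k)) * H2 (2*k) * even_weight v k)
      = (\<Sum>m\<le>n. real (n choose m) * H2 m * even_spread (even_weight v) m)"
    by (rule sum_atMost_even_spread[symmetric])
  also have "\<dots> = (\<Sum>m\<le>n. real (n choose m) * even_spread (even_weight v) m * H2 m)"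
    by (simp only: mult_ac)
  also have "\<dots>
      = central_ratio v n / 2^n * H2 n - (\<Sum>k<n. central_ratio v k / 2^k * H_diff_quot n k)"
    by (rule H2_binomial_transform) (rule central_ratio_binomial_transform[OF assms])
  also have "2^n * \<dots>
      = central_ratio v n * H2 n - (\<Sum>k<n. central_ratio v k * 2^(n - k) * H_diff_quot n k)"
    by (auto simp: right_diff_distrib sum_distrib_left power_diff intro!: sum.cong)
  finally show ?thesis .
qed

lemma sum_alternating_choose_H2_pochhammer:
  assumes "v + 1 \<notin> \<int>\<^sub>\<le>\<^sub>0"
  shows "(\<Sum>k\<le>n. (-1)^k * real (n choose k) * (1/2)^k * central_ratio v k * H2 k)
       = - (\<Sum>k<n div 2. even_weight v k * H_diff_quot n (2*k))
         + (if even n then even_weight v (n div 2) * H2 n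
            else - (even_weight v ((n - 1) div 2) * (1 / real n)))"
proof -
  have "(\<Sum>k\<le>n. (-1)^k * real (n choose k) * (1/2)^k * central_ratio v k * H2 k)
      = (\<Sum>k\<le>n. real (n choose k) * ((-1)^k * (central_ratio v k / 2^k)) * H2 k)"
    (is "?L = _") by (simp add: power_one_over field_simps)
  also have "\<dots> = even_spread (even_weight v) n * H2 n
                  - (\<Sum>k<n. H_diff_quot n k * even_spread (even_weight v) k)"
    by (subst H2_binomial_transform[OF even_spread_binomial_transform[OF assms]]) (simp add: ac_simps)
  also have "(\<Sum>k<n. H_diff_quot n k * even_spread (even_weight v) k)
      = (\<Sum>j<(n + 1) div 2. H_diff_quot n (2*j) * even_weight v j)"
    by (rule sum_lessThan_even_spread)
  finally have L: "?L = even_spread (even_weight v) n * H2 n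
                       - (\<Sum>j<(n + 1) div 2. H_diff_quot n (2*j) * even_weight v j)" .
  show ?thesis
  proof (cases "even n")
    case False
    then have "(n + 1) div 2 = Suc (n div 2)" "2 * (n div 2) = n - 1" "(n - 1) div 2 = n div 2"
      by (auto elim: oddE)
    with False L H_diff_quot_pred[OF odd_pos] show ?thesis
      by (simp add: even_spread_def ac_simps)
  next
    case True
    then have "(n + 1) div 2 = n div 2"
      by (auto elim: evenE)
    with True L show ?thesis
      by (simp add: even_spread_def ac_simps)
  qed
qed

section \<open>Gamma-function form\<close>

lemma Gamma_plus_of_nat:
  fixes z :: real
  assumes "z \<notin> \<int>\<^sub>\<le>\<^sub>0"
  shows "Gamma (z + real m) = pochhammer z m * Gamma z"
  using pochhammer_Gamma[OF assms, of m] Gamma_nonzero[OF assms] by simp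

lemma central_binomial_pochhammer: "real ((2*k) choose k) * fact k = 4^k * pochhammer (1/2) k"
  using fact_double[of k, where 'a=real] by (simp add: binomial_fact power_mult)

lemma inverse_gbinom_half:
  assumes "v + 1 \<notin> \<int>\<^sub>\<le>\<^sub>0"
  shows "inverse (gbinom ((2 * real k + v)/2) (v/2)) = fact k / pochhammer (v/2 + 1) k"
proof -
  have a: "v/2 + 1 \<notin> \<int>\<^sub>\<le>\<^sub>0"
    by (rule half_plus_one_notin_nonpos_Ints[OF assms])
  have "(2 * real k + v)/2 + 1 = (v/2 + 1) + real k" "(2 * real k + v)/2 - v/2 + 1 = 1 + real k"
    by (simp_all add: field_simps)
  then have "gbinom ((2 * real k + v)/2) (v/2)
      = pochhammer (v/2 + 1) k * Gamma (v/2 + 1) / (Gamma (v/2 + 1) * fact k)"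
    unfolding gbinom_def by (simp only: Gamma_plus_of_nat[OF a] Gamma_fact)
  then show ?thesis
    using Gamma_nonzero[OF a] by simp
qed

lemma four_pow_even_weight_gbinom:
  assumes "v + 1 \<notin> \<int>\<^sub>\<le>\<^sub>0"
  shows "4^k * even_weight v k = real ((2*k) choose k) * inverse (gbinom ((2 * real k + v)/2) (v/2))"
  unfolding inverse_gbinom_half[OF assms] even_weight_def
  by (simp flip: central_binomial_pochhammer)

lemma even_weight_gbinom:
  assumes "v + 1 \<notin> \<int>\<^sub>\<le>\<^sub>0"
  shows "even_weight v k
       = real ((2*k) choose k) * (1/2)^(2*k) * inverse (gbinom ((2 * real k + v)/2) (v/2))"
proof -
  have "even_weight v k = (1/2)^(2*k) * (4^k * even_weight v k)"
    by (simp add: power_mult power_one_over)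
  then show ?thesis
    unfolding four_pow_even_weight_gbinom[OF assms] by (simp add: ac_simps)
qed

lemma central_ratio_gbinom:
  assumes "v + 1 \<notin> \<int>\<^sub>\<le>\<^sub>0"
  shows "central_ratio v k
       = gbinom (2 * real k + v) ((2 * real k + v)/2) * inverse (gbinom (real k + v) (v/2))"
proof -
  have a: "v/2 + 1 \<notin> \<int>\<^sub>\<le>\<^sub>0"
    by (rule half_plus_one_notin_nonpos_Ints[OF assms])
  have "pochhammer (v/2 + 1) k \<noteq> 0" "pochhammer (v + 1) k \<noteq> 0"
    using a assms pochhammer_eq_0_imp_nonpos_Int by blast+
  moreover have "2 * real k + v + 1 = (v + 1) + real (2*k)"
      "(2 * real k + v)/2 + 1 = (v/2 + 1) + real k"
      "2 * real k + v - (2 * real k + v)/2 + 1 = (v/2 + 1) + real k"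
      "real k + v + 1 = (v + 1) + real k"
      "real k + v - v/2 + 1 = (v/2 + 1) + real k"
    by (simp_all add: field_simps)
  ultimately show ?thesis
    using Gamma_nonzero[OF a] Gamma_nonzero[OF assms]
    unfolding gbinom_def central_ratio_def
    by (simp only: Gamma_plus_of_nat[OF a] Gamma_plus_of_nat[OF assms]) (simp add: field_simps)
qed

lemma sum_even_choose_H2_gbinom:
  assumes "v + 1 \<notin> \<int>\<^sub>\<le>\<^sub>0"
  shows "(\<Sum>k=0..n div 2. real (n choose (2*k)) * 2^(n - 2*k) * real ((2*k) choose k)
          * inverse (gbinom ((2 * real k + v)/2) (v/2)) * H2 (2*k))
       = gbinom (2 * real n + v) ((2 * real n + v)/2) * inverse (gbinom (real n + v) (v/2)) * H2 n
         - (\<Sum>k<n. gbinom (2 * real k + v) ((2 * real k + v)/2) * 2^(n - k) * inverse (gbinom (real k + v) (v/2))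
              * (H n - H k) / (real n - real k))"
  using sum_even_choose_H2_pochhammer[OF assms, of n]
  unfolding four_pow_even_weight_gbinom[OF assms] central_ratio_gbinom[OF assms] H_diff_quot_def
  by (simp add: atLeast0AtMost ac_simps)

lemma sum_alternating_choose_H2_gbinom:
  assumes "v + 1 \<notin> \<int>\<^sub>\<le>\<^sub>0"
  shows "(\<Sum>k=0..n. (-1)^k * real (n choose k) * (1/2)^k * gbinom (2 * real k + v) ((2 * real k + v)/2)
          * inverse (gbinom (real k + v) (v/2)) * H2 k)
       = - (\<Sum>k<n div 2. real ((2*k) choose k) * (1/2)^(2*k) * inverse (gbinom ((2 * real k + v)/2) (v/2))
              * (H n - H (2*k)) / (real n - real (2*k)))
         + (if even n then real (n choose (n div 2)) * (1/2)^n * inverse (gbinom ((real n + v)/2) (v/2)) * H2 n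
            else - real ((n - 1) choose ((n - 1) div 2)) * (1/2)^(n - 1)
                   * inverse (gbinom ((real (n - 1) + v)/2) (v/2)) * (1 / real n))"
  using sum_alternating_choose_H2_pochhammer[OF assms, of n]
  unfolding even_weight_gbinom[OF assms] central_ratio_gbinom[OF assms] H_diff_quot_def
  by (cases "even n") (auto elim!: evenE oddE simp: atLeast0AtMost ac_simps)

lemma gbinom_0_right:
  assumes "x \<ge> 0"
  shows "gbinom x 0 = 1"
proof -
  have "Gamma (x + 1) \<noteq> 0"
    using assms by (intro Gamma_nonzero) (auto dest: nonpos_Ints_nonpos)
  then show ?thesis
    by (simp add: gbinom_def)
qed

lemma gbinom_of_nat:
  assumes "k \<le> n"
  shows "gbinom (real n) (real k) = real (n choose k)"
  using assms Gamma_fact[of n, where 'a=real] Gamma_fact[of k, where 'a=real]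
    Gamma_fact[of "n - k", where 'a=real]
  by (simp add: gbinom_def binomial_fact of_nat_diff add_ac)

lemma plus_one_notin_nonpos_Ints:
  fixes v :: real
  assumes "\<not> (v \<in> \<int> \<and> v < 0)"
  shows "v + 1 \<notin> \<int>\<^sub>\<le>\<^sub>0"
proof
  assume "v + 1 \<in> \<int>\<^sub>\<le>\<^sub>0"
  then obtain m where "v + 1 = - real m"
    by (elim nonpos_Ints_cases')
  then have "v = - real (Suc m)"
    by simp
  with assms show False
    by simp
qed

theorem theorem35:
  fixes n :: nat
  shows
  "(\<Sum>k=0..n div 2. real (n choose (2*k)) * 2^(n - 2*k) * real ((2*k) choose k) * H2 (2*k))
     = real ((2*n) choose n) * H2 n
       - (\<Sum>k<n. real ((2*k) choose k) * 2^(n - k) * (H n - H k) / (real n - real k))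
   \<and>
   (\<Sum>k=0..n. (-1)^k * real (n choose k) * (1/2)^k * real ((2*k) choose k) * H2 k)
     = - (\<Sum>k<n div 2. real ((2*k) choose k) * (1/2)^(2*k) * (H n - H (2*k)) / (real n - real (2*k)))
       + (if even n then (1/2)^n * real (n choose (n div 2)) * H2 n
          else - ((1/2)^(n - 1) * real ((n - 1) choose ((n - 1) div 2)) * (1 / real n)))
   \<and>
   (\<forall>v::real. \<not> (v \<in> \<int> \<and> v < 0) \<longrightarrow>
     (\<Sum>k=0..n div 2. real (n choose (2*k)) * 2^(n - 2*k) * real ((2*k) choose k)
          * inverse (gbinom ((2 * real k + v)/2) (v/2)) * H2 (2*k))
       = gbinom (2 * real n + v) ((2 * real n + v)/2) * inverse (gbinom (real n + v) (v/2)) * H2 n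
         - (\<Sum>k<n. gbinom (2 * real k + v) ((2 * real k + v)/2) * 2^(n - k) * inverse (gbinom (real k + v) (v/2))
              * (H n - H k) / (real n - real k))
     \<and>
     (\<Sum>k=0..n. (-1)^k * real (n choose k) * (1/2)^k * gbinom (2 * real k + v) ((2 * real k + v)/2)
          * inverse (gbinom (real k + v) (v/2)) * H2 k)
       = - (\<Sum>k<n div 2. real ((2*k) choose k) * (1/2)^(2*k) * inverse (gbinom ((2 * real k + v)/2) (v/2))
              * (H n - H (2*k)) / (real n - real (2*k)))
         + (if even n then real (n choose (n div 2)) * (1/2)^n * inverse (gbinom ((real n + v)/2) (v/2)) * H2 n
            else - real ((n - 1) choose ((n - 1) div 2)) * (1/2)^(n - 1)
                   * inverse (gbinom ((real (n - 1) + v)/2) (v/2)) * (1 / real n)))"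
proof -
  have central: "gbinom (2 * real m) (real m) = real ((2*m) choose m)" for m
    using gbinom_of_nat[of m "2*m"] by simp
  show ?thesis
    apply (intro conjI allI impI)
    subgoal
      using sum_even_choose_H2_gbinom[of 0 n] by (simp add: gbinom_0_right central)
    subgoal
      using sum_alternating_choose_H2_gbinom[of 0 n]
      by (simp add: gbinom_0_right central)
    subgoal for v
      using sum_even_choose_H2_gbinom[of v n] by (simp add: plus_one_notin_nonpos_Ints)
    subgoal for v
      using sum_alternating_choose_H2_gbinom[of v n] by (simp add: plus_one_notin_nonpos_Ints)
    done
qed

end
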